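(* Let $M$ be a finite monoid. Every filtered left $M$-set is isomorphic (as a left $M$-set) to $M/K$ for a suitable saturated $F$-submonoid $K$ of $M$.
   Context: A left $M$-set $A$ is filtered if (F1) $A\neq\emptyset$; (F2) if $m_1a=m_2a$ ($m_i\in M,a\in A$) then there are $m\in M,\tilde a\in A$ with $m\tilde a=a$, $m_1m=m_2m$; (F3) for $a_1,a_2\in A$ there are $m_1,m_2\in M$, $a\in A$ with $m_ia=a_i$. A monoid $K$ is an $F$-monoid if for any $m,n\in K$ there exists $x\in K$ with $mx=nx$; an $F$-submonoid is a submonoid that is an $F$-monoid. A submonoid $K\subseteq M$ is saturated if whenever $m\in M$ and $mx=x$ for some $x\in K$, then $m\in K$. For an $F$-submonoid $K$, $M/K$ is the quotient of $M$ by the equivalence relation $m\sim_K n\iff \exists x\in K: mx=nx$, with left $M$-action induced by left multiplication. *)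

theory Defs
  imports Main
begin

definition left_Mset :: "'a set \<Rightarrow> ('m::monoid_mult \<Rightarrow> 'a \<Rightarrow> 'a) \<Rightarrow> bool" where
  "left_Mset A act \<longleftrightarrow>
     (\<forall>m a. a \<in> A \<longrightarrow> act m a \<in> A) \<and>
     (\<forall>a\<in>A. act 1 a = a) \<and>
     (\<forall>m n a. a \<in> A \<longrightarrow> act (m * n) a = act m (act n a))"

definition filtered_Mset :: "'a set \<Rightarrow> ('m::monoid_mult \<Rightarrow> 'a \<Rightarrow> 'a) \<Rightarrow> bool" where
  "filtered_Mset A act \<longleftrightarrow> left_Mset A act \<and>
     A \<noteq> {} \<and>
     (\<forall>m1 m2 a. a \<in> A \<and> act m1 a = act m2 a \<longrightarrow>
        (\<exists>m. \<exists>a'\<in>A. act m a' = a \<and> m1 * m = m2 * m)) \<and>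
     (\<forall>a1\<in>A. \<forall>a2\<in>A. \<exists>m1 m2. \<exists>a\<in>A. act m1 a = a1 \<and> act m2 a = a2)"

definition submonoid :: "'m::monoid_mult set \<Rightarrow> bool" where
  "submonoid K \<longleftrightarrow> 1 \<in> K \<and> (\<forall>x\<in>K. \<forall>y\<in>K. x * y \<in> K)"

definition F_submonoid :: "'m::monoid_mult set \<Rightarrow> bool" where
  "F_submonoid K \<longleftrightarrow> submonoid K \<and> (\<forall>m\<in>K. \<forall>n\<in>K. \<exists>x\<in>K. m * x = n * x)"

definition saturated :: "'m::monoid_mult set \<Rightarrow> bool" where
  "saturated K \<longleftrightarrow> submonoid K \<and> (\<forall>m x. x \<in> K \<and> m * x = x \<longrightarrow> m \<in> K)"

definition simK :: "'m::monoid_mult set \<Rightarrow> 'm \<Rightarrow> 'm \<Rightarrow> bool" where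
  "simK K m n \<longleftrightarrow> (\<exists>x\<in>K. m * x = n * x)"

definition simK_rel :: "'m::monoid_mult set \<Rightarrow> ('m \<times> 'm) set" where
  "simK_rel K = {(m, n). simK K m n}"

definition quot :: "'m::monoid_mult set \<Rightarrow> 'm set set" where
  "quot K = UNIV // simK_rel K"

definition cls :: "'m::monoid_mult set \<Rightarrow> 'm \<Rightarrow> 'm set" where
  "cls K m = simK_rel K `` {m}"

definition quot_act :: "'m::monoid_mult set \<Rightarrow> 'm \<Rightarrow> 'm set \<Rightarrow> 'm set" where
  "quot_act K m C = cls K (m * (SOME c. c \<in> C))"

definition Mset_iso :: "'a set \<Rightarrow> ('m \<Rightarrow> 'a \<Rightarrow> 'a) \<Rightarrow> 'b set \<Rightarrow> ('m \<Rightarrow> 'b \<Rightarrow> 'b) \<Rightarrow> bool" where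
  "Mset_iso A act B act' \<longleftrightarrow>
     (\<exists>f. bij_betw f A B \<and> (\<forall>m. \<forall>a\<in>A. f (act m a) = act' m (f a)))"

end

theory Submission
  imports Defs
begin

text \<open>Over a finite monoid a filtered M-set is cyclic: an element a whose orbit has maximal
  size generates, because by (F3) a and any b lie in the orbit of a common c, and the
  orbit of c, containing that of a, cannot be larger. Take K to be the stabilizer of a.
  Two elements m, n act equally on a exactly when m ~K n: one direction is immediate,
  the other is (F2) followed by moving the resulting a' back to a. Hence
  [m] \<mapsto> m a is an isomorphism M/K \<cong> A, and K is a saturated F-submonoid.\<close>

definition stabilizer :: "('m::monoid_mult \<Rightarrow> 'a \<Rightarrow> 'a) \<Rightarrow> 'a \<Rightarrow> 'm set" where
  "stabilizer act a = {x. act x a = a}"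

lemma left_Mset_closed: "left_Mset A act \<Longrightarrow> a \<in> A \<Longrightarrow> act m a \<in> A"
  and left_Mset_one: "left_Mset A act \<Longrightarrow> a \<in> A \<Longrightarrow> act 1 a = a"
  and left_Mset_mult: "left_Mset A act \<Longrightarrow> a \<in> A \<Longrightarrow> act (m * n) a = act m (act n a)"
  unfolding left_Mset_def by auto

lemma directed_Mset_finite_cyclic:
  fixes act :: "'m::{monoid_mult, finite} \<Rightarrow> 'a \<Rightarrow> 'a"
  assumes L: "left_Mset A act" and ne: "A \<noteq> {}"
    and directed: "\<forall>a1\<in>A. \<forall>a2\<in>A. \<exists>m1 m2. \<exists>a\<in>A. act m1 a = a1 \<and> act m2 a = a2"
  shows "\<exists>a\<in>A. \<forall>b\<in>A. \<exists>m. act m a = b"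
proof -
  define orbit where "orbit x = range (\<lambda>m. act m x)" for x
  have finite_orbit: "finite (orbit x)" for x
    unfolding orbit_def by simp
  define sizes where "sizes = (\<lambda>x. card (orbit x)) ` A"
  have "sizes \<subseteq> {..card (UNIV::'m set)}"
    unfolding sizes_def orbit_def by (auto intro: card_image_le[OF finite_UNIV])
  then have "finite sizes"
    by (rule finite_subset) simp
  moreover have "sizes \<noteq> {}"
    using ne unfolding sizes_def by blast
  ultimately have "Max sizes \<in> sizes" and "\<And>c. c \<in> A \<Longrightarrow> card (orbit c) \<le> Max sizes"
    unfolding sizes_def by auto
  then obtain a where aA: "a \<in> A" and a_max: "\<And>c. c \<in> A \<Longrightarrow> card (orbit c) \<le> card (orbit a)"
    unfolding sizes_def by auto
  have "\<exists>m. act m a = b" if bA: "b \<in> A" for b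
  proof -
    obtain m1 m2 c where cA: "c \<in> A" and c1: "act m1 c = a" and c2: "act m2 c = b"
      using directed aA bA by blast
    have "orbit a \<subseteq> orbit c"
    proof
      fix y assume "y \<in> orbit a"
      then obtain m where "y = act m a"
        unfolding orbit_def by blast
      then have "y = act (m * m1) c"
        using left_Mset_mult[OF L cA] c1 by simp
      then show "y \<in> orbit c"
        unfolding orbit_def by blast
    qed
    moreover have "card (orbit c) \<le> card (orbit a)"
      using a_max[OF cA] .
    ultimately have "orbit a = orbit c"
      using card_seteq[OF finite_orbit] by blast
    moreover have "b \<in> orbit c"
      using c2 by (auto simp: orbit_def)
    ultimately have "b \<in> orbit a"
      by simp
    then show ?thesis
      unfolding orbit_def by blast
  qed
  then show ?thesis
    using aA by blast
qed

lemma saturated_stabilizer: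
  assumes "left_Mset A act" and "a \<in> A"
  shows "saturated (stabilizer act a)"
proof -
  have "act m a = a" if "act x a = a" and "m * x = x" for m x
    using left_Mset_mult[OF assms, of m x] that by simp
  then show ?thesis
    using left_Mset_one[OF assms] left_Mset_mult[OF assms]
    unfolding saturated_def submonoid_def stabilizer_def by auto
qed

lemma simK_stabilizer_iff:
  assumes F: "filtered_Mset A act" and aA: "a \<in> A"
    and gen: "\<forall>b\<in>A. \<exists>m. act m a = b"
  shows "simK (stabilizer act a) m n \<longleftrightarrow> act m a = act n a"
proof
  have L: "left_Mset A act"
    using F unfolding filtered_Mset_def by blast
  show "simK (stabilizer act a) m n \<Longrightarrow> act m a = act n a"
    using left_Mset_mult[OF L aA] unfolding simK_def stabilizer_def by (metis mem_Collect_eq)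
  assume "act m a = act n a"
  then obtain m' a' where a'A: "a' \<in> A" and m'a': "act m' a' = a" and mm': "m * m' = n * m'"
    using F aA unfolding filtered_Mset_def by blast
  obtain y where "act y a = a'"
    using gen a'A by blast
  then have "m' * y \<in> stabilizer act a"
    using left_Mset_mult[OF L aA] m'a' by (simp add: stabilizer_def)
  moreover have "m * (m' * y) = n * (m' * y)"
    using mm' by (simp add: mult.assoc[symmetric])
  ultimately show "simK (stabilizer act a) m n"
    unfolding simK_def by blast
qed

lemma F_submonoid_stabilizer:
  assumes F: "filtered_Mset A act" and aA: "a \<in> A"
    and gen: "\<forall>b\<in>A. \<exists>m. act m a = b"
  shows "F_submonoid (stabilizer act a)"
  unfolding F_submonoid_def
proof (intro conjI ballI)
  show "submonoid (stabilizer act a)"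
    using saturated_stabilizer[of A act a] F aA
    unfolding saturated_def filtered_Mset_def by blast
  fix m n assume "m \<in> stabilizer act a" "n \<in> stabilizer act a"
  then have "simK (stabilizer act a) m n"
    using simK_stabilizer_iff[OF F aA gen] by (simp add: stabilizer_def)
  then show "\<exists>x\<in>stabilizer act a. m * x = n * x"
    unfolding simK_def .
qed

lemma Mset_iso_quot_if_simK_iff:
  assumes L: "left_Mset A act" and aA: "a \<in> A"
    and gen: "\<forall>b\<in>A. \<exists>m. act m a = b"
    and simK_iff: "\<And>m n. simK K m n \<longleftrightarrow> act m a = act n a"
  shows "Mset_iso A act (quot K) (quot_act K)"
proof -
  define f where "f b = {n. act n a = b}" for b
  have cls_eq: "cls K m = f (act m a)" for m
    unfolding cls_def simK_rel_def f_def using simK_iff by auto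
  have quot_eq: "quot K = range (cls K)"
    unfolding quot_def quotient_def cls_def by auto
  have f_act: "f (act m b) = quot_act K m (f b)" if bA: "b \<in> A" for m b
  proof -
    have "\<exists>c. c \<in> f b"
      using gen bA unfolding f_def by blast
    then have "act (SOME c. c \<in> f b) a = b"
      unfolding f_def by (metis (mono_tags) mem_Collect_eq someI_ex)
    then show ?thesis
      unfolding quot_act_def cls_eq using left_Mset_mult[OF L aA] by simp
  qed
  have "bij_betw f A (quot K)"
  proof (rule bij_betwI')
    show "(f x = f y) = (x = y)" if "x \<in> A" for x y
    proof
      obtain n where "act n a = x"
        using gen \<open>x \<in> A\<close> by blast
      then show "f x = f y \<Longrightarrow> x = y"
        unfolding f_def by blast
    qed simp
    show "f x \<in> quot K" if "x \<in> A" for x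
      using gen that cls_eq unfolding quot_eq by (metis rangeI)
    show "\<exists>x\<in>A. C = f x" if "C \<in> quot K" for C
      using that left_Mset_closed[OF L aA] cls_eq unfolding quot_eq by blast
  qed
  then show ?thesis
    unfolding Mset_iso_def using f_act by blast
qed

theorem theorem3p12:
  fixes A :: "'a set" and act :: "'m::{monoid_mult, finite} \<Rightarrow> 'a \<Rightarrow> 'a"
  assumes "filtered_Mset A act"
  shows "\<exists>K :: 'm set. F_submonoid K \<and> saturated K \<and>
           Mset_iso A act (quot K) (quot_act K)"
proof -
  have L: "left_Mset A act"
    using assms unfolding filtered_Mset_def by blast
  obtain a where aA: "a \<in> A" and gen: "\<forall>b\<in>A. \<exists>m. act m a = b"
    using directed_Mset_finite_cyclic[OF L] assms unfolding filtered_Mset_def by blast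
  show ?thesis
  proof (intro exI conjI)
    show "F_submonoid (stabilizer act a)"
      using F_submonoid_stabilizer[OF assms aA gen] .
    show "saturated (stabilizer act a)"
      using saturated_stabilizer[OF L aA] .
    show "Mset_iso A act (quot (stabilizer act a)) (quot_act (stabilizer act a))"
      using Mset_iso_quot_if_simK_iff[OF L aA gen simK_stabilizer_iff[OF assms aA gen]] .
  qed
qed

end
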